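(* For all $n>0$ and all lattice paths $P$ from $(0,0)$ to $(n,n)$ with unit north and east steps, $\mathrm{word}(\phi_{\mathrm{LW}}(P))=\mathrm{sw}^-_{1,-1}(\mathrm{word}(P))$.
   Context: Words over $\{\mathrm{N},\mathrm{E}\}$ are identified with lattice paths from $(0,0)$ (N = unit north step, E = unit east step); $\mathrm{word}(P)$ is the word of a path $P$, and $\mathrm{rev}$ reverses a word. The levels of a word $w=w_1\cdots w_n$ for $\mathrm{sw}^-_{1,-1}$ are $l_0=0$, $l_i=l_{i-1}+1$ if $w_i=\mathrm{N}$, $l_i=l_{i-1}-1$ if $w_i=\mathrm{E}$. $\mathrm{sw}^-_{1,-1}(w)$ is obtained by: for $k=-1,-2,\ldots$ and then $k=\ldots,2,1,0$ (all negative values in decreasing order, then all nonnegative values in decreasing order), scan $w$ from right to left and append each letter $w_i$ ($i\ge1$) with $l_i=k$. For a path $P$ from $(0,0)$ to $(n,n)$, its area vector is $g(P)=(g_0,\ldots,g_{n-1})$ where $g_i+n-i$ is the number of complete unit squares in the strip $\{(x,y):x\ge0,\ i\le y\le i+1\}$ lying to the right of $P$ and to the left of the line $x=n$. For each integer $i$, let $z^{(i)}$ be the subsequence of $g(P)$ consisting of all entries equal to $i$ or $i-1$, and let $\sigma^{(i)}$ be obtained by replacing each $i$ by $\mathrm{E}$ and each $i-1$ by $\mathrm{N}$. For $i\ge0$ let $\tau^{(i)}=\mathrm{rev}(\sigma^{(i)})$. For $i<0$, $\sigma^{(i)}$ (when nonempty) ends in $\mathrm{E}$; writing $\sigma^{(i)}=\tilde\sigma^{(i)}\mathrm{E}$,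 let $\tau^{(i)}=\mathrm{rev}(\tilde\sigma^{(i)})\mathrm{E}$ (and $\tau^{(i)}$ empty if $\sigma^{(i)}$ is empty). Then $\phi_{\mathrm{LW}}(P)$ is the path with word $\tau^{(-1)}\tau^{(-2)}\cdots\tau^{(-n)}\tau^{(n)}\cdots\tau^{(2)}\tau^{(1)}\tau^{(0)}$. *)

theory Defs
  imports Main
begin

text \<open>Unit steps of a lattice path: north (N) and east (E).
  A lattice path from (0,0) is identified with its word of steps, so
  word(P) is P itself.\<close>

datatype step = N | E

definition lattice_path :: "nat \<Rightarrow> step list \<Rightarrow> bool" where
  "lattice_path n w \<longleftrightarrow> count_list w N = n \<and> count_list w E = n"

definition level :: "step list \<Rightarrow> nat \<Rightarrow> int" where
  "level w i = int (count_list (take i w) N) - int (count_list (take i w) E)"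

text \<open>Letters w_i (1-based) having level k, read from right to left.\<close>
definition sw_block :: "step list \<Rightarrow> int \<Rightarrow> step list" where
  "sw_block w k = [w ! (i - 1). i \<leftarrow> rev [1..<length w + 1], level w i = k]"

text \<open>Levels of letters lie in
  [-length w, length w], so it suffices to range over these values.\<close>
definition sw_minus :: "step list \<Rightarrow> step list" where
  "sw_minus w = concat (map (sw_block w)
      (map (\<lambda>j. - int j) [1..<length w + 1] @ rev (map int [0..<length w + 1])))"

text \<open>Position (0-based) in w of the (i+1)-st north step, i.e. the north step
  crossing the strip i \<le> y \<le> i+1.\<close>
definition north_pos :: "step list \<Rightarrow> nat \<Rightarrow> nat" where
  "north_pos w i = [j. j \<leftarrow> [0..<length w], w ! j = N] ! i"

text \<open>The number of complete unit squares in the strip i \<le> y \<le> i+1 to the right of P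
  and to the left of x = n is n - north_x w i.\<close>
definition north_x :: "step list \<Rightarrow> nat \<Rightarrow> nat" where
  "north_x w i = count_list (take (north_pos w i) w) E"

text \<open>Area vector g(P) = (g_0,...,g_{n-1}) with g_i + n - i = n - north_x w i.\<close>
definition area_vector :: "nat \<Rightarrow> step list \<Rightarrow> int list" where
  "area_vector n w = map (\<lambda>i. (int n - int (north_x w i)) - int n + int i) [0..<n]"

definition sigma_LW :: "nat \<Rightarrow> step list \<Rightarrow> int \<Rightarrow> step list" where
  "sigma_LW n w i = map (\<lambda>x. if x = i then E else N)
      (filter (\<lambda>x. x = i \<or> x = i - 1) (area_vector n w))"

definition tau_LW :: "nat \<Rightarrow> step list \<Rightarrow> int \<Rightarrow> step list" where
  "tau_LW n w i =
     (let s = sigma_LW n w i in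
      if 0 \<le> i then rev s
      else if s = [] then [] else rev (butlast s) @ [E])"

definition phi_LW :: "nat \<Rightarrow> step list \<Rightarrow> step list" where
  "phi_LW n w = concat (map (tau_LW n w)
      (map (\<lambda>j. - int j) [1..<n + 1] @ rev (map int [0..<n + 1])))"

end

theory Submission
  imports Defs
begin

text \<open>The area vector of P lists the level at which each north step of P starts. Fix k and
  walk along P: a north step starting at level k-1 arrives at level k, and a north step starting
  at level k is answered by the next east step arriving back at k. Hence sigma^(k) is the
  left-to-right word of the steps arriving at level k, up to a shift by one east step, present
  exactly when the path starts or ends above k. As P starts and ends at level 0, this shift
  occurs only for k < 0, where tau^(k) undoes it; reversal turns the left-to-right word
  into the right-to-left scan of sw^-_{1,-1}.\<close>

lemma concat_map_if_singleton [simp]: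
  "concat (map (\<lambda>x. if P x then [f x] else []) xs) = map f (filter P xs)"
  by (induction xs) auto

lemma upt_0_Suc_eq_Cons: "[0..<Suc m] = 0 # map Suc [0..<m]"
  by (simp add: upt_conv_Cons map_Suc_upt del: upt_Suc)

lemma count_list_take_le: "count_list (take i xs) x \<le> count_list xs x"
  by (metis append_take_drop_id count_list_append le_add1)

lemma length_eq_count_N_plus_count_E: "length w = count_list w N + count_list w E"
proof (induction w)
  case (Cons x w)
  then show ?case by (cases x) simp_all
qed simp

lemma level_0 [simp]: "level w 0 = 0"
  by (simp add: level_def)

lemma level_Cons_Suc [simp]:
  "level (x # w) (Suc i) = (if x = N then 1 else -1) + level w i"
  by (cases x) (simp_all add: level_def)

lemma abs_level_le:
  assumes "lattice_path n w"
  shows "\<bar>level w i\<bar> \<le> int n"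
  using assms count_list_take_le[of i w N] count_list_take_le[of i w E]
  by (auto simp: lattice_path_def level_def)

lemma sw_block_out_of_range:
  assumes "lattice_path n w" and "int n < \<bar>k\<bar>"
  shows "sw_block w k = []"
proof -
  have "level w i \<noteq> k" for i
    using abs_level_le[OF assms(1), of i] assms(2) by auto
  then show ?thesis by (simp add: sw_block_def filter_empty_conv)
qed

definition next_level :: "int \<Rightarrow> step \<Rightarrow> int" where
  "next_level a x = a + (if x = N then 1 else -1)"

fun arrivals :: "int \<Rightarrow> step list \<Rightarrow> int \<Rightarrow> step list" where
  "arrivals a [] k = []"
| "arrivals a (x # w) k = (if next_level a x = k then [x] else []) @ arrivals (next_level a x) w k"

fun north_levels :: "int \<Rightarrow> step list \<Rightarrow> int list" where
  "north_levels a [] = []"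
| "north_levels a (x # w) = (if x = N then [a] else []) @ north_levels (next_level a x) w"

definition sigma_from :: "int \<Rightarrow> step list \<Rightarrow> int \<Rightarrow> step list" where
  "sigma_from a w k = map (\<lambda>x. if x = k then E else N) (filter (\<lambda>x. x = k \<or> x = k - 1) (north_levels a w))"

lemma arrivals_conv_level:
  "arrivals a w k = [w ! i. i \<leftarrow> [0..<length w], a + level w (Suc i) = k]"
  by (induction w arbitrary: a)
     (auto simp: upt_0_Suc_eq_Cons filter_map comp_def next_level_def add.assoc simp del: upt_Suc)

lemma sw_block_eq_rev_arrivals: "sw_block w k = rev (arrivals 0 w k)"
proof -
  have "rev [1..<length w + 1] = rev (map Suc [0..<length w])"
    by (simp add: map_Suc_upt)
  then show ?thesis
    by (simp add: sw_block_def arrivals_conv_level rev_map rev_filter filter_map comp_def del: upt_Suc)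
qed

definition north_positions :: "step list \<Rightarrow> nat list" where
  "north_positions w = [j. j \<leftarrow> [0..<length w], w ! j = N]"

lemma north_positions_Nil [simp]: "north_positions [] = []"
  by (simp add: north_positions_def)

lemma north_pos_eq_nth_north_positions: "north_pos w i = north_positions w ! i"
  by (simp add: north_pos_def north_positions_def)

lemma north_positions_Cons:
  "north_positions (x # w) = (if x = N then [0] else []) @ map Suc (north_positions w)"
  by (simp add: north_positions_def upt_0_Suc_eq_Cons filter_map comp_def del: upt_Suc)

lemma length_north_positions: "length (north_positions w) = count_list w N"
  by (induction w) (auto simp: north_positions_Cons)

lemma count_N_before_north_position:
  "i < count_list w N \<Longrightarrow> count_list (take (north_positions w ! i) w) N = i"
proof (induction w arbitrary: i)
  case (Cons x w)
  then show ?case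
    by (cases x; cases i) (auto simp: north_positions_Cons length_north_positions)
qed simp

lemma north_levels_conv_level: "north_levels a w = map (\<lambda>j. a + level w j) (north_positions w)"
  by (induction w arbitrary: a) (auto simp: north_positions_Cons next_level_def add.assoc)

lemma area_vector_eq_north_levels:
  assumes "count_list w N = n"
  shows "area_vector n w = north_levels 0 w"
proof (rule nth_equalityI)
  show "length (area_vector n w) = length (north_levels 0 w)"
    using assms by (simp add: area_vector_def north_levels_conv_level length_north_positions)
next
  fix i assume "i < length (area_vector n w)"
  then have "i < count_list w N" using assms by (simp add: area_vector_def)
  then show "area_vector n w ! i = north_levels 0 w ! i"
    using count_N_before_north_position[of i w] assms
    by (simp add: area_vector_def north_x_def north_pos_eq_nth_north_positions
        north_levels_conv_level length_north_positions level_def)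
qed

lemma sigma_from_matches_arrivals:
  "(if k < a then [E] else []) @ sigma_from a w k
   = arrivals a w k @ (if k < a + level w (length w) then [E] else [])"
proof (induction w arbitrary: a)
  case (Cons x w)
  show ?case
  proof (cases x)
    case N
    then show ?thesis using Cons.IH[of "a + 1"] by (auto simp: sigma_from_def next_level_def)
  next
    case E
    then show ?thesis using Cons.IH[of "a - 1"] by (auto simp: sigma_from_def next_level_def)
  qed
qed (simp add: sigma_from_def)

lemma rev_of_Cons_eq_snoc:
  assumes "x # s = r @ [x]"
  shows "(if s = [] then [] else rev (butlast s) @ [x]) = rev r"
  using assms by (cases s rule: rev_cases) (auto simp: Cons_eq_append_conv)

lemma tau_LW_eq_sw_block:
  assumes "lattice_path n w"
  shows "tau_LW n w k = sw_block w k"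
proof -
  have "sigma_LW n w k = sigma_from 0 w k"
    using assms by (simp add: lattice_path_def sigma_LW_def sigma_from_def area_vector_eq_north_levels)
  moreover have "level w (length w) = 0"
    using assms by (simp add: lattice_path_def level_def)
  then have "(if k < 0 then [E] else []) @ sigma_from 0 w k
      = arrivals 0 w k @ (if k < 0 then [E] else [])"
    using sigma_from_matches_arrivals[of k 0 w] by simp
  ultimately show ?thesis
    using rev_of_Cons_eq_snoc[of E "sigma_from 0 w k" "arrivals 0 w k"]
    by (auto simp: tau_LW_def sw_block_eq_rev_arrivals Let_def)
qed

theorem mainTheorem4:
  fixes n :: nat and P :: "step list"
  assumes "n > 0" and "lattice_path n P"
  shows "phi_LW n P = sw_minus P"
proof -
  have len: "length P = n + n"
    using assms(2) length_eq_count_N_plus_count_E[of P] by (simp add: lattice_path_def)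
  have split_1: "[1..<n + n + 1] = [1..<n + 1] @ [n + 1..<n + n + 1]"
    and split_0: "[0..<n + n + 1] = [0..<n + 1] @ [n + 1..<n + n + 1]"
    using upt_add_eq_append[of 1 "n + 1" n] upt_add_eq_append[of 0 "n + 1" n]
    by (simp_all add: add_ac del: upt_Suc)
  have drop_negative: "concat (map (sw_block P) (map (\<lambda>j. - int j) [n + 1..<n + n + 1])) = []"
    and drop_positive: "concat (map (sw_block P) (rev (map int [n + 1..<n + n + 1]))) = []"
    using sw_block_out_of_range[OF assms(2)] by auto
  have "tau_LW n P = sw_block P"
    using tau_LW_eq_sw_block[OF assms(2)] by blast
  then show ?thesis
    unfolding phi_LW_def sw_minus_def len split_1 split_0
    by (simp only: map_append rev_append concat_append drop_negative drop_positive
        append_Nil append_Nil2 append_assoc)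
qed

end
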